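(* Let $\mathbf B$ be an $n\times q$ random matrix with i.i.d. $\mathcal N(0,1)$ entries, $\mathbf C$ a deterministic $q\times p$ matrix, and $\mathbf A=\mathbf B\mathbf C$. Let $\mathcal K\subset\mathbb R^p$ and $\varepsilon\ge0$. For $\mathbf x^\star\in\mathcal K$, suppose we observe $\mathbf y=\mathbf A\mathbf x^\star+\boldsymbol\nu$ with $\frac1n\|\boldsymbol\nu\|_1\le\varepsilon$, and choose $\widehat{\mathbf x}$ to be any vector satisfying $\widehat{\mathbf x}\in\mathcal K$ and $\frac1n\|\mathbf A\widehat{\mathbf x}-\mathbf y\|_1\le\varepsilon$. Then $$\mathbb E\sup_{\mathbf x^\star\in\mathcal K}\left\{(\widehat{\mathbf x}-\mathbf x^\star)^T\mathbf C^T\mathbf C(\widehat{\mathbf x}-\mathbf x^\star)\right\}^{1/2}\le\sqrt{2\pi}\left(\frac{\mathbb E\sup_{\mathbf u\in\mathcal K-\mathcal K}|\langle\mathbf C^T\mathbf g,\mathbf u\rangle|}{\sqrt n}+\varepsilon\right),$$ where $\mathbf g\sim\mathcal N(0,\mathbf I_q)$ and $\mathcal K-\mathcal K=\{\mathbf u-\mathbf v:\mathbf u,\mathbf v\in\mathcal K\}$.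
   Context: No assumption is made on the error $\boldsymbol\nu$ other than $\frac1n\|\boldsymbol\nu\|_1\le\varepsilon$; $\widehat{\mathbf x}$ may be any vector meeting the stated feasibility conditions for the given $\mathbf y$. *)

theory Defs
  imports "HOL-Probability.Probability"
begin

definition std_gauss :: "real measure" where
  "std_gauss = density lborel (\<lambda>x. ennreal (std_normal_density x))"

definition gauss_mat :: "nat \<Rightarrow> nat \<Rightarrow> (nat \<times> nat \<Rightarrow> real) measure" where
  "gauss_mat n q = PiM ({..<n} \<times> {..<q}) (\<lambda>_. std_gauss)"

definition gauss_vec :: "nat \<Rightarrow> (nat \<Rightarrow> real) measure" where
  "gauss_vec q = PiM {..<q} (\<lambda>_. std_gauss)"

definition mat_mult :: "nat \<Rightarrow> (nat \<times> nat \<Rightarrow> real) \<Rightarrow> (nat \<Rightarrow> nat \<Rightarrow> real) \<Rightarrow> nat \<Rightarrow> nat \<Rightarrow> real" where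
  "mat_mult q B C = (\<lambda>i j. \<Sum>k<q. B (i, k) * C k j)"

definition mat_vec :: "nat \<Rightarrow> (nat \<Rightarrow> nat \<Rightarrow> real) \<Rightarrow> (nat \<Rightarrow> real) \<Rightarrow> nat \<Rightarrow> real" where
  "mat_vec c M x = (\<lambda>i. \<Sum>j<c. M i j * x j)"

text \<open>Vectors in R^p, represented as functions nat => real vanishing from index p on.\<close>
definition vecs :: "nat \<Rightarrow> (nat \<Rightarrow> real) set" where
  "vecs p = {x. \<forall>j\<ge>p. x j = 0}"

end

theory Submission
  imports Defs
begin

(* Fix a feasible pair and put w = C (xh - xs).  The two l1 constraints give
   (1/n) |B w|_1 <= 2 eps by the triangle inequality, whereas E (1/n) |B w|_1 = sqrt(2/pi) |w|_2
   for a Gaussian B.  Hence |w|_2 <= sqrt(pi/2) (2 eps + G(B)), where G(B) is the supremum over all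
   directions w of the positive part of sqrt(2/pi) |w|_2 - (1/n) |B w|_1.  Its expectation is at most
   2 E sup_w <g, w> / sqrt n: exchanging rows of B with those of an independent copy introduces random
   signs, the contraction principle removes the absolute values, and a sign-weighted sum of the rows
   of B, divided by sqrt n, is again a standard Gaussian vector.  Suprema over uncountable sets are
   replaced by suprema over countable dense subsets to keep everything measurable. *)

lemma ennreal_add_le: "ennreal (a + b) \<le> ennreal a + ennreal b"
proof -
  have "ennreal (a + b) \<le> ennreal (max 0 a + max 0 b)" by (intro ennreal_leI) auto
  then show ?thesis by (simp add: ennreal_max_0)
qed

lemma ennreal_integral_le_nn_integral:
  "integrable M f \<Longrightarrow> ennreal (integral\<^sup>L M f) \<le> (\<integral>\<^sup>+x. ennreal (f x) \<partial>M)"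
  using integral_mono[of M f "\<lambda>x. max 0 (f x)"] nn_integral_eq_integral[of M "\<lambda>x. max 0 (f x)"]
  by (auto simp: ennreal_max_0 intro!: ennreal_leI)

lemma ennreal_divide_pos: "0 < c \<Longrightarrow> ennreal (x / c) = ennreal x / ennreal c"
  by (cases "0 \<le> x") (auto simp: divide_ennreal ennreal_neg divide_nonpos_pos)

lemma enn2ereal_SUP_ennreal:
  fixes r :: "'u \<Rightarrow> real"
  assumes "u\<^sub>0 \<in> U" "r u\<^sub>0 \<ge> 0"
  shows "enn2ereal (SUP u\<in>U. ennreal (r u)) = (SUP u\<in>U. ereal (r u))"
proof (rule antisym)
  have nonneg: "0 \<le> (SUP u\<in>U. ereal (r u))"
    using assms by (metis SUP_upper ereal_less_eq(5) order_trans)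
  have "(SUP u\<in>U. ennreal (r u)) \<le> e2ennreal (SUP u\<in>U. ereal (r u))"
  proof (rule SUP_least)
    fix u assume "u \<in> U"
    then have "enn2ereal (ennreal (r u)) \<le> (SUP u\<in>U. ereal (r u))"
      using nonneg by (auto simp: ennreal.rep_eq intro: SUP_upper)
    then show "ennreal (r u) \<le> e2ennreal (SUP u\<in>U. ereal (r u))"
      by (simp add: less_eq_ennreal.rep_eq enn2ereal_e2ennreal[OF nonneg])
  qed
  then show "enn2ereal (SUP u\<in>U. ennreal (r u)) \<le> (SUP u\<in>U. ereal (r u))"
    by (simp add: less_eq_ennreal.rep_eq enn2ereal_e2ennreal[OF nonneg])
  show "(SUP u\<in>U. ereal (r u)) \<le> enn2ereal (SUP u\<in>U. ennreal (r u))"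
  proof (rule SUP_least)
    fix u assume u: "u \<in> U"
    have "ereal (r u) \<le> enn2ereal (ennreal (r u))" by (simp add: ennreal.rep_eq)
    also have "\<dots> \<le> enn2ereal (SUP u\<in>U. ennreal (r u))"
      using SUP_upper[OF u, of "\<lambda>u. ennreal (r u)"] by (simp add: less_eq_ennreal.rep_eq)
    finally show "ereal (r u) \<le> enn2ereal (SUP u\<in>U. ennreal (r u))" .
  qed
qed

section \<open>Standard Gaussian vectors\<close>

lemma prob_space_std_gauss: "prob_space std_gauss"
  unfolding std_gauss_def by (rule prob_space_normal_density) simp

lemma sets_std_gauss [simp, measurable_cong]: "sets std_gauss = sets borel"
  by (simp add: std_gauss_def)

lemma space_std_gauss [simp]: "space std_gauss = UNIV"
  by (simp add: std_gauss_def)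

lemma measurable_std_gauss [simp]: "measurable M std_gauss = borel_measurable M"
  by (rule measurable_cong_sets) simp_all

lemma prob_space_PiM_std_gauss: "prob_space (PiM S (\<lambda>_. std_gauss))"
  by (intro prob_space_PiM prob_space_std_gauss)

lemma prob_space_gauss_mat: "prob_space (gauss_mat n q)"
  unfolding gauss_mat_def by (rule prob_space_PiM_std_gauss)

lemma borel_measurable_PiM_std_gauss_component:
  "s \<in> S \<Longrightarrow> (\<lambda>x. x s) \<in> borel_measurable (PiM S (\<lambda>_. std_gauss))"
  using measurable_component_singleton[of s S "\<lambda>_. std_gauss"] by simp

lemma indep_vars_PiM_std_gauss_components:
  assumes "finite S" "S \<noteq> {}"
  shows "prob_space.indep_vars (PiM S (\<lambda>_. std_gauss)) (\<lambda>_. borel) (\<lambda>s x. x s) S"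
proof -
  interpret P: prob_space "PiM S (\<lambda>_. std_gauss)" by (rule prob_space_PiM_std_gauss)
  have "distr (PiM S (\<lambda>_. std_gauss)) (PiM S (\<lambda>_. std_gauss)) (\<lambda>x. \<lambda>i\<in>S. x i)
      = distr (PiM S (\<lambda>_. std_gauss)) (PiM S (\<lambda>_. std_gauss)) (\<lambda>x. x)"
    by (rule distr_cong) (auto simp: space_PiM)
  also have "\<dots> = PiM S (\<lambda>_. std_gauss)" by (rule distr_id)
  also have "\<dots> = PiM S (\<lambda>i. distr (PiM S (\<lambda>_. std_gauss)) std_gauss (\<lambda>x. x i))"
    by (intro PiM_cong refl distr_PiM_component[symmetric] prob_space_std_gauss)
  finally have "P.indep_vars (\<lambda>_. std_gauss) (\<lambda>s x. x s) S"
    by (subst P.indep_vars_iff_distr_eq_PiM'[OF assms(2)]) auto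
  then show ?thesis
    unfolding P.indep_vars_def2 by simp
qed

lemma distributed_PiM_std_gauss_component:
  assumes "s \<in> S"
  shows "distributed (PiM S (\<lambda>_. std_gauss)) lborel (\<lambda>x. x s) std_normal_density"
proof -
  have "distr (PiM S (\<lambda>_. std_gauss)) lborel (\<lambda>x. x s)
      = distr (PiM S (\<lambda>_. std_gauss)) std_gauss (\<lambda>x. x s)"
    by (rule distr_cong) auto
  also have "\<dots> = std_gauss" by (rule distr_PiM_component[OF prob_space_std_gauss assms])
  finally show ?thesis
    unfolding distributed_def std_gauss_def using assms by auto
qed

lemma distributed_PiM_std_gauss_linear:
  assumes S: "finite S" and pos: "(\<Sum>s\<in>S. (a s)^2) > 0"
  shows "distributed (PiM S (\<lambda>_. std_gauss)) lborel (\<lambda>x. \<Sum>s\<in>S. a s * x s)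
           (normal_density 0 (sqrt (\<Sum>s\<in>S. (a s)^2)))"
proof -
  interpret P: prob_space "PiM S (\<lambda>_. std_gauss)" by (rule prob_space_PiM_std_gauss)
  define S' where "S' = {s\<in>S. a s \<noteq> 0}"
  have S'S: "S' \<subseteq> S" and fS': "finite S'" using S by (auto simp: S'_def)
  have sq: "(\<Sum>s\<in>S. (a s)^2) = (\<Sum>s\<in>S'. (a s)^2)"
    using S by (intro sum.mono_neutral_right) (auto simp: S'_def)
  have sm: "(\<Sum>s\<in>S. a s * x s) = (\<Sum>s\<in>S'. a s * x s)" for x
    using S by (intro sum.mono_neutral_right) (auto simp: S'_def)
  have ne: "S' \<noteq> {}" using pos sq by auto
  have ind: "P.indep_vars (\<lambda>_. borel) (\<lambda>s x. a s * x s) S'"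
    using ne S'S S
    by (intro P.indep_vars_subset[OF P.indep_vars_compose2[OF indep_vars_PiM_std_gauss_components]])
       auto
  have dist: "distributed (PiM S (\<lambda>_. std_gauss)) lborel (\<lambda>x. a s * x s) (normal_density 0 \<bar>a s\<bar>)"
    if "s \<in> S'" for s
    using P.normal_density_affine[OF distributed_PiM_std_gauss_component[of s S], of "a s" 0] that
    by (auto simp: S'_def)
  have "distributed (PiM S (\<lambda>_. std_gauss)) lborel (\<lambda>x. \<Sum>s\<in>S'. a s * x s)
           (normal_density (\<Sum>s\<in>S'. 0) (sqrt (\<Sum>s\<in>S'. \<bar>a s\<bar>^2)))"
    by (rule P.sum_indep_normal[OF fS' ne ind _ dist]) (auto simp: S'_def)
  then show ?thesis by (simp add: sm sq)
qed

lemma distr_PiM_std_gauss_unit_linear: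
  assumes "finite S" and "(\<Sum>s\<in>S. (a s)^2) = 1"
  shows "distr (PiM S (\<lambda>_. std_gauss)) std_gauss (\<lambda>x. \<Sum>s\<in>S. a s * x s) = std_gauss"
proof -
  have "distr (PiM S (\<lambda>_. std_gauss)) std_gauss (\<lambda>x. \<Sum>s\<in>S. a s * x s)
      = distr (PiM S (\<lambda>_. std_gauss)) lborel (\<lambda>x. \<Sum>s\<in>S. a s * x s)"
    by (rule distr_cong) auto
  also have "\<dots> = std_gauss"
    using distributed_PiM_std_gauss_linear[OF assms(1), of a] assms(2)
    unfolding distributed_def std_gauss_def by simp
  finally show ?thesis .
qed

lemma integrable_integral_abs_PiM_std_gauss_linear:
  assumes S: "finite S"
  shows "integrable (PiM S (\<lambda>_. std_gauss)) (\<lambda>x. \<bar>\<Sum>s\<in>S. a s * x s\<bar>)"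
    and "(\<integral>x. \<bar>\<Sum>s\<in>S. a s * x s\<bar> \<partial>PiM S (\<lambda>_. std_gauss)) = sqrt (2/pi) * sqrt (\<Sum>s\<in>S. (a s)^2)"
proof -
  have "integrable (PiM S (\<lambda>_. std_gauss)) (\<lambda>x. \<bar>\<Sum>s\<in>S. a s * x s\<bar>)
    \<and> (\<integral>x. \<bar>\<Sum>s\<in>S. a s * x s\<bar> \<partial>PiM S (\<lambda>_. std_gauss)) = sqrt (2/pi) * sqrt (\<Sum>s\<in>S. (a s)^2)"
  proof (cases "(\<Sum>s\<in>S. (a s)^2) > 0")
    case False
    then have "\<forall>s\<in>S. a s = 0"
      using S sum_nonneg_eq_0_iff[of S "\<lambda>s. (a s)^2"] sum_nonneg[of S "\<lambda>s. (a s)^2"] by auto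
    then show ?thesis by simp
  next
    case True
    define \<sigma> where "\<sigma> = sqrt (\<Sum>s\<in>S. (a s)^2)"
    have \<sigma>: "\<sigma> > 0" using True by (simp add: \<sigma>_def)
    note D = distributed_PiM_std_gauss_linear[OF S True, folded \<sigma>_def]
    have "integrable lborel (\<lambda>x. normal_density 0 \<sigma> x * \<bar>x\<bar>)"
      using integrable_normal_moment_abs[OF \<sigma>, of 0 1] by simp
    moreover have "(LBINT x. normal_density 0 \<sigma> x * \<bar>x\<bar>) = \<sigma> * sqrt (2/pi)"
      using integral_normal_moment_abs_odd[OF \<sigma>, of 0 0] by simp
    ultimately show ?thesis
      using distributed_integrable[OF D, of "\<lambda>x. \<bar>x\<bar>"] distributed_integral[OF D, of "\<lambda>x. \<bar>x\<bar>"]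
        normal_density_nonneg[of 0 \<sigma>]
      by (auto simp: \<sigma>_def mult.commute)
  qed
  then show "integrable (PiM S (\<lambda>_. std_gauss)) (\<lambda>x. \<bar>\<Sum>s\<in>S. a s * x s\<bar>)"
    and "(\<integral>x. \<bar>\<Sum>s\<in>S. a s * x s\<bar> \<partial>PiM S (\<lambda>_. std_gauss)) = sqrt (2/pi) * sqrt (\<Sum>s\<in>S. (a s)^2)"
    by auto
qed

lemma sum_product_lessThan:
  "(\<Sum>s\<in>{..<n} \<times> {..<q}. f s) = (\<Sum>i<n. \<Sum>k<q. f (i, k))" for n q :: nat
  by (simp add: sum.cartesian_product)

lemma sum_row_of_product:
  "i < n \<Longrightarrow> (\<Sum>s\<in>{..<n} \<times> {..<q}. if fst s = i then f s else 0) = (\<Sum>k<q. f (i, k))"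
  for n q :: nat
  unfolding sum_product_lessThan by (subst sum.swap) simp

lemma sum_column_of_product:
  "k < q \<Longrightarrow> (\<Sum>s\<in>{..<n} \<times> {..<q}. if snd s = k then f s else 0) = (\<Sum>i<n. f (i, k))"
  for n q :: nat
  unfolding sum_product_lessThan by simp

text \<open>The entries are \<open>N(0,1)\<close> because \<open>a\<close> is a unit vector, and independent because they
  depend on disjoint columns of \<open>B\<close>.\<close>

lemma distr_gauss_mat_row_combination:
  assumes q: "q > 0" and a: "(\<Sum>i<n. (a i)^2) = 1"
  shows "distr (gauss_mat n q) (gauss_vec q) (\<lambda>B. \<lambda>k\<in>{..<q}. \<Sum>i<n. a i * B (i,k))
       = gauss_vec q"
proof -
  define S where "S = {..<n} \<times> {..<q}"
  have "n > 0" using a by (cases n) auto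
  then have fS: "finite S" and SNE: "S \<noteq> {}" using q by (auto simp: S_def)
  interpret P: prob_space "PiM S (\<lambda>_. std_gauss)" by (rule prob_space_PiM_std_gauss)
  define Y where "Y k B = (\<Sum>i<n. a i * B (i,k))" for k and B :: "nat \<times> nat \<Rightarrow> real"
  define c where "c k s = (if snd s = k then a (fst s) else 0)" for k and s :: "nat \<times> nat"
  have Y_linear: "Y k = (\<lambda>B. \<Sum>s\<in>S. c k s * B s)" if "k < q" for k
  proof
    fix B :: "nat \<times> nat \<Rightarrow> real"
    show "Y k B = (\<Sum>s\<in>S. c k s * B s)"
      using sum_column_of_product[OF that, where n=n and f="\<lambda>s. a (fst s) * B s"]
      by (simp add: S_def c_def Y_def if_distrib[of "\<lambda>x. x * _"] cong: if_cong)
  qed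
  have c_unit: "(\<Sum>s\<in>S. (c k s)^2) = 1" if "k < q" for k
    using sum_column_of_product[OF that, where n=n and f="\<lambda>s. (a (fst s))^2"] a
    by (simp add: S_def c_def if_distrib[of "\<lambda>x. x^2"] cong: if_cong)
  have distr_Y: "distr (PiM S (\<lambda>_. std_gauss)) std_gauss (Y k) = std_gauss" if "k < q" for k
    unfolding Y_linear[OF that] by (rule distr_PiM_std_gauss_unit_linear[OF fS c_unit[OF that]])
  define col where "col k = {..<n} \<times> {k}" for k :: nat
  have "P.indep_vars (\<lambda>k. PiM (col k) (\<lambda>_. borel)) (\<lambda>k x. restrict x (col k)) {..<q}"
    by (rule P.indep_vars_restrict[OF indep_vars_PiM_std_gauss_components[OF fS SNE]])
       (auto simp: col_def S_def disjoint_family_on_def)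
  then have "P.indep_vars (\<lambda>_. borel) (\<lambda>k x. Y k (restrict x (col k))) {..<q}"
    by (rule P.indep_vars_compose2)
       (auto simp: col_def Y_def intro!: measurable_component_singleton)
  also have "(\<lambda>k x. Y k (restrict x (col k))) = Y"
    by (auto simp: fun_eq_iff Y_def col_def)
  finally have ind: "P.indep_vars (\<lambda>_. std_gauss) Y {..<q}"
    unfolding P.indep_vars_def2 by simp
  then have "Y k \<in> measurable (PiM S (\<lambda>_. std_gauss)) std_gauss" if "k < q" for k
    using that unfolding P.indep_vars_def2 by auto
  with ind q have "distr (PiM S (\<lambda>_. std_gauss)) (PiM {..<q} (\<lambda>_. std_gauss)) (\<lambda>x. \<lambda>k\<in>{..<q}. Y k x)
      = PiM {..<q} (\<lambda>k. distr (PiM S (\<lambda>_. std_gauss)) std_gauss (Y k))"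
    by (subst (asm) P.indep_vars_iff_distr_eq_PiM') auto
  also have "\<dots> = PiM {..<q} (\<lambda>k. std_gauss)"
    by (intro PiM_cong refl) (simp add: distr_Y)
  finally show ?thesis by (simp add: gauss_mat_def gauss_vec_def S_def Y_def)
qed

definition row_dot :: "nat \<Rightarrow> (nat \<times> nat \<Rightarrow> real) \<Rightarrow> (nat \<Rightarrow> real) \<Rightarrow> nat \<Rightarrow> real" where
  "row_dot q B w i = (\<Sum>k<q. B (i, k) * w k)"

lemma mat_vec_mat_mult: "mat_vec p (mat_mult q B C) x i = row_dot q B (mat_vec p C x) i"
  unfolding mat_vec_def mat_mult_def row_dot_def
  by (simp add: sum_distrib_left sum_distrib_right mult.assoc) (rule sum.swap)

lemma mat_vec_diff: "mat_vec c M (x - y) = mat_vec c M x - mat_vec c M y"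
  by (simp add: mat_vec_def fun_eq_iff algebra_simps sum_subtractf)

lemma row_dot_diff: "row_dot q B (v - w) i = row_dot q B v i - row_dot q B w i"
  by (simp add: row_dot_def algebra_simps sum_subtractf)

lemma row_dot_zero [simp]: "row_dot q B (\<lambda>_. 0) i = 0"
  by (simp add: row_dot_def)

lemma sum_mult_row_dot: "(\<Sum>i<n. a i * row_dot q B w i) = (\<Sum>k<q. (\<Sum>i<n. a i * B (i, k)) * w k)"
  unfolding row_dot_def sum_distrib_left sum_distrib_right by (subst sum.swap) (simp add: mult_ac)

lemma sum_mult_mat_vec: "(\<Sum>k<q. g k * mat_vec p C u k) = (\<Sum>j<p. (\<Sum>k<q. C k j * g k) * u j)"
  unfolding mat_vec_def sum_distrib_left sum_distrib_right by (subst sum.swap) (simp add: mult_ac)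

lemma quadratic_form_eq_sum_square_mat_vec:
  "(\<Sum>j<p. \<Sum>l<p. d j * (\<Sum>k<q. C k j * C k l) * d l) = (\<Sum>k<q. (mat_vec p C d k)^2)"
proof -
  have "(\<Sum>k<q. (mat_vec p C d k)^2) = (\<Sum>k<q. \<Sum>j<p. \<Sum>l<p. d j * (C k j * C k l) * d l)"
    unfolding mat_vec_def power2_eq_square sum_product by (intro sum.cong refl) (simp add: ac_simps)
  also have "\<dots> = (\<Sum>j<p. \<Sum>l<p. \<Sum>k<q. d j * (C k j * C k l) * d l)"
    by (subst sum.swap) (intro sum.cong refl sum.swap)
  also have "\<dots> = (\<Sum>j<p. \<Sum>l<p. d j * (\<Sum>k<q. C k j * C k l) * d l)"
    by (simp add: sum_distrib_left sum_distrib_right)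
  finally show ?thesis ..
qed

lemma borel_measurable_row_dot:
  "i < n \<Longrightarrow> (\<lambda>B. row_dot q B w i) \<in> borel_measurable (gauss_mat n q)"
  unfolding row_dot_def gauss_mat_def
  by (intro borel_measurable_sum borel_measurable_times borel_measurable_const
      borel_measurable_PiM_std_gauss_component) auto

lemma row_dot_eq_linear_form:
  assumes "i < n"
  shows "row_dot q B w i = (\<Sum>s\<in>{..<n} \<times> {..<q}. (if fst s = i then w (snd s) else 0) * B s)"
    and "(\<Sum>s\<in>{..<n} \<times> {..<q}. (if fst s = i then w (snd s) else 0)^2) = (\<Sum>k<q. (w k)^2)"
proof -
  have "row_dot q B w i = (\<Sum>k<q. w k * B (i, k))"
    by (simp add: row_dot_def mult.commute)
  also have "\<dots> = (\<Sum>s\<in>{..<n} \<times> {..<q}. if fst s = i then w (snd s) * B s else 0)"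
    using sum_row_of_product[OF assms, where f="\<lambda>s. w (snd s) * B s"] by (simp cong: if_cong)
  finally show "row_dot q B w i = (\<Sum>s\<in>{..<n} \<times> {..<q}. (if fst s = i then w (snd s) else 0) * B s)"
    by (simp add: if_distrib[of "\<lambda>x. x * _"] cong: if_cong)
  show "(\<Sum>s\<in>{..<n} \<times> {..<q}. (if fst s = i then w (snd s) else 0)^2) = (\<Sum>k<q. (w k)^2)"
    using sum_row_of_product[OF assms, where f="\<lambda>s. (w (snd s))^2"]
    by (simp add: if_distrib[of "\<lambda>x. x^2"] cong: if_cong)
qed

lemma integrable_abs_row_dot:
  "i < n \<Longrightarrow> integrable (gauss_mat n q) (\<lambda>B. \<bar>row_dot q B w i\<bar>)"
  using integrable_integral_abs_PiM_std_gauss_linear(1)[of "{..<n} \<times> {..<q}"]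
  by (simp add: row_dot_eq_linear_form gauss_mat_def)

lemma integral_abs_row_dot:
  "i < n \<Longrightarrow> (\<integral>B. \<bar>row_dot q B w i\<bar> \<partial>gauss_mat n q) = sqrt (2/pi) * L2_set w {..<q}"
  using integrable_integral_abs_PiM_std_gauss_linear(2)[of "{..<n} \<times> {..<q}"]
  by (simp add: row_dot_eq_linear_form gauss_mat_def L2_set_def)

section \<open>Exchanging rows with an independent copy\<close>

text \<open>A Gaussian \<open>2n \<times> q\<close> matrix consists of two independent Gaussian \<open>n \<times> q\<close> matrices,
  its top and bottom rows; exchanging some rows of the two copies permutes the entries of the
  big matrix and therefore preserves its law.\<close>

definition top_rows :: "nat \<Rightarrow> nat \<Rightarrow> (nat \<times> nat \<Rightarrow> real) \<Rightarrow> nat \<times> nat \<Rightarrow> real" where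
  "top_rows n q x = restrict x ({..<n} \<times> {..<q})"

definition bottom_rows :: "nat \<Rightarrow> nat \<Rightarrow> (nat \<times> nat \<Rightarrow> real) \<Rightarrow> nat \<times> nat \<Rightarrow> real" where
  "bottom_rows n q x = (\<lambda>s\<in>{..<n} \<times> {..<q}. x (fst s + n, snd s))"

definition swap_rows :: "nat \<Rightarrow> nat set \<Rightarrow> nat \<times> nat \<Rightarrow> nat \<times> nat" where
  "swap_rows n E s =
    (if fst s < n \<and> fst s \<in> E then (fst s + n, snd s)
     else if n \<le> fst s \<and> fst s - n \<in> E then (fst s - n, snd s) else s)"

definition mix_rows ::
    "nat \<Rightarrow> nat \<Rightarrow> nat set \<Rightarrow> (nat \<times> nat \<Rightarrow> real) \<Rightarrow> (nat \<times> nat \<Rightarrow> real) \<Rightarrow> nat \<times> nat \<Rightarrow> real" where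
  "mix_rows n q E B B' = (\<lambda>s\<in>{..<n} \<times> {..<q}. if fst s \<in> E then B' s else B s)"

lemma measurable_top_rows: "top_rows n q \<in> measurable (gauss_mat (2*n) q) (gauss_mat n q)"
  unfolding gauss_mat_def top_rows_def[abs_def]
  by (rule measurable_restrict) (auto intro!: measurable_component_singleton)

lemma measurable_bottom_rows: "bottom_rows n q \<in> measurable (gauss_mat (2*n) q) (gauss_mat n q)"
  unfolding gauss_mat_def bottom_rows_def[abs_def]
  by (rule measurable_restrict) (auto intro!: measurable_component_singleton)

lemma row_dot_mix_rows:
  "i < n \<Longrightarrow> row_dot q (mix_rows n q E B B') w i = (if i \<in> E then row_dot q B' w i else row_dot q B w i)"
  by (auto simp: row_dot_def mix_rows_def intro!: sum.cong)

lemma measurable_mix_rows: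
  assumes "X \<in> measurable N (gauss_mat n q)" and "Y \<in> measurable N (gauss_mat n q)"
  shows "(\<lambda>x. mix_rows n q E (X x) (Y x)) \<in> measurable N (gauss_mat n q)"
  unfolding mix_rows_def gauss_mat_def
proof (rule measurable_restrict)
  fix s assume s: "s \<in> {..<n} \<times> {..<q}"
  have component: "(\<lambda>B. B s) \<in> measurable (gauss_mat n q) std_gauss"
    unfolding gauss_mat_def using s by (rule measurable_component_singleton)
  show "(\<lambda>x. if fst s \<in> E then Y x s else X x s) \<in> measurable N std_gauss"
    using measurable_compose[OF assms(1) component] measurable_compose[OF assms(2) component]
    by simp
qed

lemma nn_integral_gauss_mat_double:
  assumes f: "(\<lambda>(B, B'). f B B') \<in> borel_measurable (gauss_mat n q \<Otimes>\<^sub>M gauss_mat n q)"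
  shows "(\<integral>\<^sup>+x. f (top_rows n q x) (bottom_rows n q x) \<partial>gauss_mat (2*n) q)
       = (\<integral>\<^sup>+B. (\<integral>\<^sup>+B'. f B B' \<partial>gauss_mat n q) \<partial>gauss_mat n q)"
proof -
  define S where "S = {..<n} \<times> {..<q}"
  define S' where "S' = {n..<2*n} \<times> {..<q}"
  define shift where "shift s = (fst s + n, snd s)" for s :: "nat \<times> nat"
  interpret product_sigma_finite "\<lambda>_::nat \<times> nat. std_gauss"
    unfolding product_sigma_finite_def
    using prob_space_std_gauss prob_space_imp_sigma_finite by blast
  have split: "{..<2*n} \<times> {..<q} = S \<union> S'" "S \<inter> S' = {}" "finite S" "finite S'"
    by (auto simp: S_def S'_def)
  have f_double: "(\<lambda>x. f (top_rows n q x) (bottom_rows n q x)) \<in> borel_measurable (gauss_mat (2*n) q)"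
    using measurable_compose[OF measurable_Pair[OF measurable_top_rows measurable_bottom_rows] f]
    by simp
  have f_section: "f B \<in> borel_measurable (gauss_mat n q)" if "B \<in> space (gauss_mat n q)" for B
    using measurable_Pair2[OF f that] by simp
  have distr_shift:
    "distr (PiM S' (\<lambda>_. std_gauss)) (gauss_mat n q) (\<lambda>y. \<lambda>s\<in>S. y (shift s)) = gauss_mat n q"
    unfolding gauss_mat_def S_def[symmetric]
    by (rule distr_PiM_reindex) (auto intro: prob_space_std_gauss simp: inj_on_def S_def S'_def shift_def)
  have measurable_shift:
    "(\<lambda>y. \<lambda>s\<in>S. y (shift s)) \<in> measurable (PiM S' (\<lambda>_. std_gauss)) (gauss_mat n q)"
    unfolding gauss_mat_def S_def[symmetric]
    by (rule measurable_restrict) (auto intro!: measurable_component_singleton simp: shift_def S_def S'_def)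
  have "(\<integral>\<^sup>+x. f (top_rows n q x) (bottom_rows n q x) \<partial>gauss_mat (2*n) q)
      = (\<integral>\<^sup>+x. (\<integral>\<^sup>+y. f (top_rows n q (merge S S' (x, y))) (bottom_rows n q (merge S S' (x, y)))
            \<partial>PiM S' (\<lambda>_. std_gauss)) \<partial>PiM S (\<lambda>_. std_gauss))"
    using f_double unfolding gauss_mat_def split(1) by (rule product_nn_integral_fold[OF split(2-4)])
  also have "\<dots> = (\<integral>\<^sup>+x. (\<integral>\<^sup>+y. f x (\<lambda>s\<in>S. y (shift s)) \<partial>PiM S' (\<lambda>_. std_gauss)) \<partial>PiM S (\<lambda>_. std_gauss))"
  proof (intro nn_integral_cong)
    fix x y assume "x \<in> space (PiM S (\<lambda>_. std_gauss))"
    then have "top_rows n q (merge S S' (x, y)) = x" and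
      "bottom_rows n q (merge S S' (x, y)) = (\<lambda>s\<in>S. y (shift s))"
      by (auto simp: top_rows_def bottom_rows_def S_def S'_def shift_def space_PiM PiE_def
          extensional_def merge_def fun_eq_iff)
    then show "f (top_rows n q (merge S S' (x, y))) (bottom_rows n q (merge S S' (x, y)))
        = f x (\<lambda>s\<in>S. y (shift s))"
      by simp
  qed
  also have "\<dots> = (\<integral>\<^sup>+x. (\<integral>\<^sup>+B'. f x B' \<partial>gauss_mat n q) \<partial>PiM S (\<lambda>_. std_gauss))"
  proof (intro nn_integral_cong)
    fix x assume "x \<in> space (PiM S (\<lambda>_. std_gauss))"
    then have "f x \<in> borel_measurable (gauss_mat n q)"
      by (intro f_section) (simp add: gauss_mat_def S_def)
    then show "(\<integral>\<^sup>+y. f x (\<lambda>s\<in>S. y (shift s)) \<partial>PiM S' (\<lambda>_. std_gauss)) = (\<integral>\<^sup>+B'. f x B' \<partial>gauss_mat n q)"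
      using nn_integral_distr[OF measurable_shift, of "f x"] by (simp add: distr_shift)
  qed
  finally show ?thesis by (simp add: gauss_mat_def S_def)
qed

lemma nn_integral_swap_rows:
  assumes E: "E \<subseteq> {..<n}" and f: "f \<in> borel_measurable (gauss_mat (2*n) q)"
  shows "(\<integral>\<^sup>+x. f (\<lambda>s\<in>{..<2*n} \<times> {..<q}. x (swap_rows n E s)) \<partial>gauss_mat (2*n) q)
       = integral\<^sup>N (gauss_mat (2*n) q) f"
proof -
  let ?swap = "\<lambda>x. \<lambda>s\<in>{..<2*n} \<times> {..<q}. x (swap_rows n E s)"
  have "inj_on (swap_rows n E) ({..<2*n} \<times> {..<q})"
    unfolding inj_on_def swap_rows_def by (auto split: if_splits)
  moreover have "swap_rows n E \<in> {..<2*n} \<times> {..<q} \<rightarrow> {..<2*n} \<times> {..<q}"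
    using E by (auto simp: swap_rows_def)
  ultimately have "distr (gauss_mat (2*n) q) (gauss_mat (2*n) q) ?swap = gauss_mat (2*n) q"
    unfolding gauss_mat_def by (intro distr_PiM_reindex) (auto intro: prob_space_std_gauss)
  moreover have "?swap \<in> measurable (gauss_mat (2*n) q) (gauss_mat (2*n) q)"
    unfolding gauss_mat_def using E
    by (intro measurable_restrict)
       (auto intro!: measurable_component_singleton simp: swap_rows_def split: if_splits)
  ultimately show ?thesis
    using nn_integral_distr[of ?swap "gauss_mat (2*n) q" "gauss_mat (2*n) q" f] f by simp
qed

lemma top_rows_swap_rows:
  "E \<subseteq> {..<n} \<Longrightarrow> top_rows n q (\<lambda>s\<in>{..<2*n} \<times> {..<q}. x (swap_rows n E s))
     = mix_rows n q E (top_rows n q x) (bottom_rows n q x)"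
  by (auto simp: top_rows_def bottom_rows_def mix_rows_def swap_rows_def fun_eq_iff)

lemma bottom_rows_swap_rows:
  "E \<subseteq> {..<n} \<Longrightarrow> bottom_rows n q (\<lambda>s\<in>{..<2*n} \<times> {..<q}. x (swap_rows n E s))
     = mix_rows n q E (bottom_rows n q x) (top_rows n q x)"
  by (auto simp: top_rows_def bottom_rows_def mix_rows_def swap_rows_def fun_eq_iff)

lemma nn_integral_gauss_mat_exchange_rows:
  assumes E: "E \<subseteq> {..<n}"
    and f: "(\<lambda>(B, B'). f B B') \<in> borel_measurable (gauss_mat n q \<Otimes>\<^sub>M gauss_mat n q)"
  shows "(\<integral>\<^sup>+B. (\<integral>\<^sup>+B'. f B B' \<partial>gauss_mat n q) \<partial>gauss_mat n q)
       = (\<integral>\<^sup>+B. (\<integral>\<^sup>+B'. f (mix_rows n q E B B') (mix_rows n q E B' B) \<partial>gauss_mat n q) \<partial>gauss_mat n q)"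
proof -
  have f_mix: "(\<lambda>(B, B'). f (mix_rows n q E B B') (mix_rows n q E B' B))
      \<in> borel_measurable (gauss_mat n q \<Otimes>\<^sub>M gauss_mat n q)"
    using measurable_compose[OF measurable_Pair[OF measurable_mix_rows measurable_mix_rows] f,
        OF measurable_fst measurable_snd measurable_snd measurable_fst]
    by (simp add: case_prod_beta')
  have f_double: "(\<lambda>x. f (top_rows n q x) (bottom_rows n q x)) \<in> borel_measurable (gauss_mat (2*n) q)"
    using measurable_compose[OF measurable_Pair[OF measurable_top_rows measurable_bottom_rows] f]
    by simp
  have "(\<integral>\<^sup>+B. (\<integral>\<^sup>+B'. f B B' \<partial>gauss_mat n q) \<partial>gauss_mat n q)
      = (\<integral>\<^sup>+x. f (top_rows n q x) (bottom_rows n q x) \<partial>gauss_mat (2*n) q)"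
    by (rule nn_integral_gauss_mat_double[OF f, symmetric])
  also have "\<dots> = (\<integral>\<^sup>+x. f (top_rows n q (\<lambda>s\<in>{..<2*n} \<times> {..<q}. x (swap_rows n E s)))
      (bottom_rows n q (\<lambda>s\<in>{..<2*n} \<times> {..<q}. x (swap_rows n E s))) \<partial>gauss_mat (2*n) q)"
    by (rule nn_integral_swap_rows[OF E f_double, symmetric])
  also have "\<dots> = (\<integral>\<^sup>+x. f (mix_rows n q E (top_rows n q x) (bottom_rows n q x))
      (mix_rows n q E (bottom_rows n q x) (top_rows n q x)) \<partial>gauss_mat (2*n) q)"
    by (simp add: top_rows_swap_rows[OF E] bottom_rows_swap_rows[OF E])
  also have "\<dots> = (\<integral>\<^sup>+B. (\<integral>\<^sup>+B'. f (mix_rows n q E B B') (mix_rows n q E B' B) \<partial>gauss_mat n q) \<partial>gauss_mat n q)"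
    using nn_integral_gauss_mat_double[OF f_mix] by simp
  finally show ?thesis .
qed

section \<open>The contraction principle for random signs\<close>

text \<open>Averaging over all sign patterns \<open>E \<in> Pow I\<close> plays the role of taking expectations over
  independent Rademacher signs.\<close>

definition sign_flip :: "'i set \<Rightarrow> 'i \<Rightarrow> real" where
  "sign_flip E i = (if i \<in> E then -1 else 1)"

lemma sign_flip_square [simp]: "(sign_flip E i)^2 = 1"
  by (simp add: sign_flip_def)

definition signed_sup :: "'i set \<Rightarrow> 'u set \<Rightarrow> 'i set \<Rightarrow> ('i \<Rightarrow> 'u \<Rightarrow> real) \<Rightarrow> ennreal" where
  "signed_sup I U E t = (SUP u\<in>U. ennreal (\<Sum>i\<in>I. sign_flip E i * t i u))"

lemma borel_measurable_signed_sup: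
  assumes "countable U" and "\<And>i u. i \<in> I \<Longrightarrow> u \<in> U \<Longrightarrow> (\<lambda>x. t x i u) \<in> borel_measurable M"
  shows "(\<lambda>x. signed_sup I U E (t x)) \<in> borel_measurable M"
  unfolding signed_sup_def using assms
  by (intro borel_measurable_SUP measurable_compose[OF _ measurable_ennreal]
      borel_measurable_sum borel_measurable_times borel_measurable_const) auto

lemma signed_sup_diff_le:
  "signed_sup I U E (\<lambda>i u. a i u - b i u) \<le> signed_sup I U E a + signed_sup I U (I - E) b"
  unfolding signed_sup_def
proof (rule SUP_least)
  fix u assume u: "u \<in> U"
  have "(\<Sum>i\<in>I. sign_flip E i * (a i u - b i u))
      = (\<Sum>i\<in>I. sign_flip E i * a i u) + (\<Sum>i\<in>I. sign_flip (I - E) i * b i u)"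
    unfolding sum.distrib[symmetric] by (intro sum.cong refl) (auto simp: sign_flip_def)
  then show "ennreal (\<Sum>i\<in>I. sign_flip E i * (a i u - b i u))
      \<le> (SUP u\<in>U. ennreal (\<Sum>i\<in>I. sign_flip E i * a i u))
        + (SUP u\<in>U. ennreal (\<Sum>i\<in>I. sign_flip (I - E) i * b i u))"
    using u by (auto intro!: order_trans[OF ennreal_add_le] add_mono SUP_upper)
qed

lemma sum_Pow_insert:
  assumes "finite I" "j \<notin> I"
  shows "(\<Sum>E\<in>Pow (insert j I). f E) = (\<Sum>E\<in>Pow I. f E) + (\<Sum>E\<in>Pow I. f (insert j E))"
proof -
  have "Pow I \<inter> insert j ` Pow I = {}" using assms by auto
  moreover have "inj_on (insert j) (Pow I)"
    using assms(2) by (intro inj_onI) (metis PowD insert_ident subsetD)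
  ultimately show ?thesis
    using assms by (simp add: Pow_insert sum.union_disjoint sum.reindex)
qed

lemma ereal_SUP_add_SUP_le:
  fixes f g :: "'u \<Rightarrow> real"
  assumes U: "U \<noteq> {}" and le: "\<And>u v. u \<in> U \<Longrightarrow> v \<in> U \<Longrightarrow> ereal (f u) + ereal (g v) \<le> z"
  shows "(SUP u\<in>U. ereal (f u)) + (SUP v\<in>U. ereal (g v)) \<le> z"
proof -
  have finite: "(SUP u\<in>U. ereal (f u)) \<noteq> -\<infinity>"
    using U SUP_upper[of _ U "\<lambda>u. ereal (f u)"] by fastforce
  have "(SUP u\<in>U. ereal (f u)) + ereal (g v) \<le> z" if "v \<in> U" for v
  proof -
    have "(SUP u\<in>U. ereal (f u)) + ereal (g v) = (SUP u\<in>U. ereal (f u) + ereal (g v))"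
      using U by (subst SUP_ereal_add_left) auto
    also have "\<dots> \<le> z" using le that by (intro SUP_least) auto
    finally show ?thesis .
  qed
  moreover have "(SUP u\<in>U. ereal (f u)) + (SUP v\<in>U. ereal (g v))
      = (SUP v\<in>U. (SUP u\<in>U. ereal (f u)) + ereal (g v))"
    using U finite by (simp add: SUP_ereal_add_right)
  ultimately show ?thesis by (simp add: SUP_least)
qed

text \<open>The one-coordinate step: replacing \<open>t\<close> by \<open>\<bar>t\<bar>\<close> can only decrease the sum of the two
  suprema, since \<open>\<bar>t u\<bar> - \<bar>t v\<bar> \<le> \<bar>t u - t v\<bar>\<close>.\<close>

lemma SUP_plus_minus_abs_le:
  fixes c t :: "'u \<Rightarrow> real"
  assumes U: "U \<noteq> {}"
  shows "(SUP u\<in>U. ereal (c u + \<bar>t u\<bar>)) + (SUP u\<in>U. ereal (c u - \<bar>t u\<bar>))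
       \<le> (SUP u\<in>U. ereal (c u + t u)) + (SUP u\<in>U. ereal (c u - t u))"
proof (rule ereal_SUP_add_SUP_le[OF U])
  fix u v assume u: "u \<in> U" and v: "v \<in> U"
  let ?R = "(SUP u\<in>U. ereal (c u + t u)) + (SUP u\<in>U. ereal (c u - t u))"
  show "ereal (c u + \<bar>t u\<bar>) + ereal (c v - \<bar>t v\<bar>) \<le> ?R"
  proof (cases "t v \<le> t u")
    case True
    then have "ereal (c u + \<bar>t u\<bar>) + ereal (c v - \<bar>t v\<bar>) \<le> ereal (c u + t u) + ereal (c v - t v)"
      by simp
    also have "\<dots> \<le> ?R" using u v by (intro add_mono SUP_upper)
    finally show ?thesis .
  next
    case False
    then have "ereal (c u + \<bar>t u\<bar>) + ereal (c v - \<bar>t v\<bar>) \<le> ereal (c v + t v) + ereal (c u - t u)"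
      by simp
    also have "\<dots> \<le> ?R" using u v by (intro add_mono SUP_upper)
    finally show ?thesis .
  qed
qed

lemma sum_Pow_SUP_abs_le:
  fixes t :: "'i \<Rightarrow> 'u \<Rightarrow> real"
  assumes I: "finite I" and U: "U \<noteq> {}"
  shows "(\<Sum>E\<in>Pow I. SUP u\<in>U. ereal (a u + (\<Sum>i\<in>I. sign_flip E i * \<bar>t i u\<bar>)))
       \<le> (\<Sum>E\<in>Pow I. SUP u\<in>U. ereal (a u + (\<Sum>i\<in>I. sign_flip E i * t i u)))"
  using I
proof (induction I arbitrary: a rule: finite_induct)
  case empty
  then show ?case by simp
next
  case (insert j I)
  define S where "S a' x E = (SUP u\<in>U. ereal (a' u + (\<Sum>i\<in>I. sign_flip E i * x i u)))"
    for a' :: "'u \<Rightarrow> real" and x :: "'i \<Rightarrow> 'u \<Rightarrow> real" and E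
  have split: "(\<Sum>E\<in>Pow (insert j I). SUP u\<in>U. ereal (a u + (\<Sum>i\<in>insert j I. sign_flip E i * x i u)))
      = (\<Sum>E\<in>Pow I. S (\<lambda>u. a u + x j u) x E) + (\<Sum>E\<in>Pow I. S (\<lambda>u. a u - x j u) x E)" for x
  proof -
    have "(\<Sum>i\<in>I. sign_flip (insert j E) i * x i u) = (\<Sum>i\<in>I. sign_flip E i * x i u)" for E u
      using insert.hyps by (intro sum.cong refl) (auto simp: sign_flip_def)
    moreover have "j \<notin> E" if "E \<in> Pow I" for E
      using that insert.hyps by auto
    ultimately show ?thesis
      unfolding sum_Pow_insert[OF insert.hyps] S_def using insert.hyps
      by (intro arg_cong2[where f="(+)"] sum.cong refl SUP_cong)
         (simp_all add: sign_flip_def algebra_simps)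
  qed
  have shift: "S (\<lambda>u. a u + f u) t E = (SUP u\<in>U. ereal ((a u + (\<Sum>i\<in>I. sign_flip E i * t i u)) + f u))"
    "S (\<lambda>u. a u - f u) t E = (SUP u\<in>U. ereal ((a u + (\<Sum>i\<in>I. sign_flip E i * t i u)) - f u))"
    for E f
    unfolding S_def by (simp_all add: algebra_simps)
  have "(\<Sum>E\<in>Pow (insert j I). SUP u\<in>U. ereal (a u + (\<Sum>i\<in>insert j I. sign_flip E i * \<bar>t i u\<bar>)))
      = (\<Sum>E\<in>Pow I. S (\<lambda>u. a u + \<bar>t j u\<bar>) (\<lambda>i u. \<bar>t i u\<bar>) E)
        + (\<Sum>E\<in>Pow I. S (\<lambda>u. a u - \<bar>t j u\<bar>) (\<lambda>i u. \<bar>t i u\<bar>) E)"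
    by (rule split)
  also have "\<dots> \<le> (\<Sum>E\<in>Pow I. S (\<lambda>u. a u + \<bar>t j u\<bar>) t E) + (\<Sum>E\<in>Pow I. S (\<lambda>u. a u - \<bar>t j u\<bar>) t E)"
    unfolding S_def by (intro add_mono insert.IH)
  also have "\<dots> = (\<Sum>E\<in>Pow I. S (\<lambda>u. a u + \<bar>t j u\<bar>) t E + S (\<lambda>u. a u - \<bar>t j u\<bar>) t E)"
    by (simp add: sum.distrib)
  also have "\<dots> \<le> (\<Sum>E\<in>Pow I. S (\<lambda>u. a u + t j u) t E + S (\<lambda>u. a u - t j u) t E)"
    unfolding shift by (intro sum_mono SUP_plus_minus_abs_le U)
  also have "\<dots> = (\<Sum>E\<in>Pow (insert j I). SUP u\<in>U. ereal (a u + (\<Sum>i\<in>insert j I. sign_flip E i * t i u)))"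
    by (simp add: split sum.distrib)
  finally show ?case .
qed

lemma sum_Pow_signed_sup_abs_le:
  assumes I: "finite I" and zero: "u\<^sub>0 \<in> U" "\<And>i. t i u\<^sub>0 = 0"
  shows "(\<Sum>E\<in>Pow I. signed_sup I U E (\<lambda>i u. \<bar>t i u\<bar>)) \<le> (\<Sum>E\<in>Pow I. signed_sup I U E t)"
proof -
  have "enn2ereal (signed_sup I U E x) = (SUP u\<in>U. ereal (\<Sum>i\<in>I. sign_flip E i * x i u))"
    if "\<And>i. x i u\<^sub>0 = 0" for E x
    unfolding signed_sup_def using zero that by (intro enn2ereal_SUP_ennreal) auto
  then have to_ereal: "enn2ereal (\<Sum>E\<in>Pow I. signed_sup I U E x)
      = (\<Sum>E\<in>Pow I. SUP u\<in>U. ereal (\<Sum>i\<in>I. sign_flip E i * x i u))"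
    if "\<And>i. x i u\<^sub>0 = 0" for x
    using that by (simp flip: sum_enn2ereal)
  have "U \<noteq> {}" using zero by auto
  then show ?thesis
    using sum_Pow_SUP_abs_le[OF I, of U "\<lambda>_. 0" t] zero
    by (simp add: less_eq_ennreal.rep_eq to_ereal)
qed

section \<open>Symmetrization of the empirical \<open>\<ell>\<^sub>1\<close> norm\<close>

text \<open>\<open>sqrt (2/pi) * L2_set w {..<q}\<close> is the mean of \<open>(\<Sum>i<n. \<bar>row_dot q B w i\<bar>) / n\<close>, so
  \<open>l1_gap\<close> measures how far the empirical \<open>\<ell>\<^sub>1\<close> norm of \<open>B w\<close> can fall below its mean.\<close>

definition l1_gap :: "nat \<Rightarrow> nat \<Rightarrow> (nat \<Rightarrow> real) set \<Rightarrow> (nat \<times> nat \<Rightarrow> real) \<Rightarrow> ennreal" where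
  "l1_gap n q W B =
    (SUP w\<in>W. ennreal (sqrt (2/pi) * L2_set w {..<q} - (\<Sum>i<n. \<bar>row_dot q B w i\<bar>) / n))"

context
  fixes n q :: nat and W :: "(nat \<Rightarrow> real) set"
  assumes n_pos: "n > 0" and q_pos: "q > 0" and countable_W: "countable W"
    and zero_in_W: "(\<lambda>_. 0) \<in> W"
begin

lemma l1_gap_le_nn_integral_signed_sup:
  "l1_gap n q W B \<le> (\<integral>\<^sup>+B'. signed_sup {..<n} W {}
      (\<lambda>i w. \<bar>row_dot q B' w i\<bar> / n - \<bar>row_dot q B w i\<bar> / n) \<partial>gauss_mat n q)"
  unfolding l1_gap_def
proof (rule SUP_least)
  fix w assume w: "w \<in> W"
  interpret prob_space "gauss_mat n q" by (rule prob_space_gauss_mat)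
  define F where "F B' = (\<Sum>i<n. \<bar>row_dot q B' w i\<bar> / n - \<bar>row_dot q B w i\<bar> / n)" for B'
  have integrable_F: "integrable (gauss_mat n q) F"
    unfolding F_def
    by (intro Bochner_Integration.integrable_sum Bochner_Integration.integrable_diff
        integrable_divide integrable_abs_row_dot) (auto simp: emeasure_space_1)
  have "expectation F = (\<Sum>i<n. sqrt (2/pi) * L2_set w {..<q} / n - \<bar>row_dot q B w i\<bar> / n)"
    unfolding F_def by (simp add: integrable_abs_row_dot integral_abs_row_dot prob_space)
  also have "\<dots> = sqrt (2/pi) * L2_set w {..<q} - (\<Sum>i<n. \<bar>row_dot q B w i\<bar>) / n"
    using n_pos by (simp add: sum_subtractf sum_divide_distrib)
  finally have "ennreal (sqrt (2/pi) * L2_set w {..<q} - (\<Sum>i<n. \<bar>row_dot q B w i\<bar>) / n)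
      \<le> (\<integral>\<^sup>+B'. ennreal (F B') \<partial>gauss_mat n q)"
    using ennreal_integral_le_nn_integral[OF integrable_F] by simp
  also have "\<dots> \<le> (\<integral>\<^sup>+B'. signed_sup {..<n} W {}
      (\<lambda>i w. \<bar>row_dot q B' w i\<bar> / n - \<bar>row_dot q B w i\<bar> / n) \<partial>gauss_mat n q)"
    using w by (auto simp: signed_sup_def sign_flip_def F_def intro!: nn_integral_mono SUP_upper2)
  finally show "ennreal (sqrt (2/pi) * L2_set w {..<q} - (\<Sum>i<n. \<bar>row_dot q B w i\<bar>) / n)
      \<le> (\<integral>\<^sup>+B'. signed_sup {..<n} W {}
        (\<lambda>i w. \<bar>row_dot q B' w i\<bar> / n - \<bar>row_dot q B w i\<bar> / n) \<partial>gauss_mat n q)" .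
qed

lemma nn_integral_l1_gap_le_signed_sup_abs:
  assumes E: "E \<subseteq> {..<n}"
  shows "(\<integral>\<^sup>+B. l1_gap n q W B \<partial>gauss_mat n q)
    \<le> (\<integral>\<^sup>+B. signed_sup {..<n} W E (\<lambda>i w. \<bar>row_dot q B w i\<bar> / n) \<partial>gauss_mat n q)
      + (\<integral>\<^sup>+B. signed_sup {..<n} W ({..<n} - E) (\<lambda>i w. \<bar>row_dot q B w i\<bar> / n) \<partial>gauss_mat n q)"
proof -
  interpret prob_space "gauss_mat n q" by (rule prob_space_gauss_mat)
  let ?M = "gauss_mat n q"
  define H where "H E B B' =
    signed_sup {..<n} W E (\<lambda>i w. \<bar>row_dot q B' w i\<bar> / n - \<bar>row_dot q B w i\<bar> / n)" for E B B'
  define R where "R E B = signed_sup {..<n} W E (\<lambda>i w. \<bar>row_dot q B w i\<bar> / n)" for E B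
  have H_measurable: "(\<lambda>(B, B'). H {} B B') \<in> borel_measurable (?M \<Otimes>\<^sub>M ?M)"
    unfolding H_def case_prod_beta
    by (intro borel_measurable_signed_sup countable_W borel_measurable_diff borel_measurable_divide
        borel_measurable_abs measurable_compose[OF measurable_fst borel_measurable_row_dot]
        measurable_compose[OF measurable_snd borel_measurable_row_dot]) auto
  have R_measurable: "R E \<in> borel_measurable ?M" for E
    unfolding R_def
    by (intro borel_measurable_signed_sup countable_W borel_measurable_divide borel_measurable_abs
        borel_measurable_row_dot) auto
  have H_mix: "H {} (mix_rows n q E B B') (mix_rows n q E B' B) = H E B B'" for B B'
    unfolding H_def signed_sup_def
    by (intro SUP_cong refl arg_cong[where f=ennreal] sum.cong)
       (auto simp: row_dot_mix_rows sign_flip_def)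
  have H_le: "H E B B' \<le> R E B' + R ({..<n} - E) B" for B B'
    unfolding H_def R_def by (rule signed_sup_diff_le)
  have "(\<integral>\<^sup>+B. l1_gap n q W B \<partial>?M) \<le> (\<integral>\<^sup>+B. (\<integral>\<^sup>+B'. H {} B B' \<partial>?M) \<partial>?M)"
    unfolding H_def by (intro nn_integral_mono l1_gap_le_nn_integral_signed_sup)
  also have "\<dots> = (\<integral>\<^sup>+B. (\<integral>\<^sup>+B'. H E B B' \<partial>?M) \<partial>?M)"
    using nn_integral_gauss_mat_exchange_rows[OF E, of "H {}", OF H_measurable] by (simp add: H_mix)
  also have "\<dots> \<le> (\<integral>\<^sup>+B. (\<integral>\<^sup>+B'. R E B' + R ({..<n} - E) B \<partial>?M) \<partial>?M)"
    by (intro nn_integral_mono H_le)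
  also have "\<dots> = (\<integral>\<^sup>+B. R E B \<partial>?M) + (\<integral>\<^sup>+B. R ({..<n} - E) B \<partial>?M)"
    by (simp add: nn_integral_add R_measurable emeasure_space_1)
  finally show ?thesis unfolding R_def .
qed

lemma nn_integral_signed_sup_row_dot:
  "(\<integral>\<^sup>+B. signed_sup {..<n} W E (\<lambda>i w. row_dot q B w i / n) \<partial>gauss_mat n q)
    = (\<integral>\<^sup>+g. (SUP w\<in>W. ennreal (\<Sum>k<q. g k * w k)) \<partial>gauss_vec q) / ennreal (sqrt n)"
proof -
  define \<Phi> where "\<Phi> B = (\<lambda>k\<in>{..<q}. \<Sum>i<n. sign_flip E i / sqrt n * B (i, k))" for B :: "nat \<times> nat \<Rightarrow> real"
  define G where "G g = (SUP w\<in>W. ennreal (\<Sum>k<q. g k * w k))" for g :: "nat \<Rightarrow> real"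
  have "(\<Sum>i<n. sign_flip E i * (row_dot q B w i / n)) = (\<Sum>k<q. \<Phi> B k * w k) / sqrt n" for B w
  proof -
    have "sign_flip E i * (r / n) = sign_flip E i / sqrt n * r / sqrt n" for i r
      using n_pos by (simp add: field_simps)
    then show ?thesis
      by (simp add: sum_divide_distrib[symmetric] sum_mult_row_dot \<Phi>_def)
  qed
  then have signed_sup_eq: "signed_sup {..<n} W E (\<lambda>i w. row_dot q B w i / n) = G (\<Phi> B) / ennreal (sqrt n)"
    for B using n_pos
    by (simp add: signed_sup_def G_def ennreal_divide_pos divide_ennreal_def SUP_mult_right_ennreal)
  have "(\<Sum>i<n. (sign_flip E i / sqrt n)^2) = 1"
    using n_pos by (simp add: power_divide)
  then have distr_\<Phi>: "distr (gauss_mat n q) (gauss_vec q) \<Phi> = gauss_vec q"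
    unfolding \<Phi>_def by (rule distr_gauss_mat_row_combination[OF q_pos])
  have \<Phi>_measurable: "\<Phi> \<in> measurable (gauss_mat n q) (gauss_vec q)"
    unfolding \<Phi>_def gauss_vec_def
    by (intro measurable_restrict)
       (auto simp: gauss_mat_def intro!: borel_measurable_sum borel_measurable_times
        borel_measurable_const borel_measurable_PiM_std_gauss_component)
  have G_measurable: "G \<in> borel_measurable (gauss_vec q)"
    unfolding G_def gauss_vec_def
    by (intro borel_measurable_SUP countable_W measurable_compose[OF _ measurable_ennreal]
        borel_measurable_sum borel_measurable_times borel_measurable_const
        borel_measurable_PiM_std_gauss_component) auto
  have "(\<integral>\<^sup>+B. signed_sup {..<n} W E (\<lambda>i w. row_dot q B w i / n) \<partial>gauss_mat n q)
      = (\<integral>\<^sup>+B. G (\<Phi> B) \<partial>gauss_mat n q) / ennreal (sqrt n)"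
    unfolding signed_sup_eq using measurable_compose[OF \<Phi>_measurable G_measurable]
    by (rule nn_integral_divide)
  also have "\<dots> = (\<integral>\<^sup>+g. G g \<partial>gauss_vec q) / ennreal (sqrt n)"
    using nn_integral_distr[OF \<Phi>_measurable, of G] G_measurable by (simp add: distr_\<Phi>)
  finally show ?thesis unfolding G_def .
qed

lemma sum_nn_integral_signed_sup_abs_row_dot_le:
  "(\<Sum>E\<in>Pow {..<n}. \<integral>\<^sup>+B. signed_sup {..<n} W E (\<lambda>i w. \<bar>row_dot q B w i\<bar> / n) \<partial>gauss_mat n q)
    \<le> of_nat (card (Pow {..<n}))
      * ((\<integral>\<^sup>+g. (SUP w\<in>W. ennreal (\<Sum>k<q. g k * w k)) \<partial>gauss_vec q) / ennreal (sqrt n))"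
proof -
  let ?M = "gauss_mat n q" and ?P = "Pow {..<n}"
  have measurable_abs: "(\<lambda>B. signed_sup {..<n} W E (\<lambda>i w. \<bar>row_dot q B w i\<bar> / n)) \<in> borel_measurable ?M"
    and measurable_linear: "(\<lambda>B. signed_sup {..<n} W E (\<lambda>i w. row_dot q B w i / n)) \<in> borel_measurable ?M"
    for E
    by (intro borel_measurable_signed_sup countable_W borel_measurable_divide borel_measurable_abs
        borel_measurable_row_dot; simp)+
  have "(\<Sum>E\<in>?P. \<integral>\<^sup>+B. signed_sup {..<n} W E (\<lambda>i w. \<bar>row_dot q B w i\<bar> / n) \<partial>?M)
      = (\<integral>\<^sup>+B. (\<Sum>E\<in>?P. signed_sup {..<n} W E (\<lambda>i w. \<bar>row_dot q B w i\<bar> / n)) \<partial>?M)"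
    by (rule nn_integral_sum[symmetric]) (rule measurable_abs)
  also have "\<dots> \<le> (\<integral>\<^sup>+B. (\<Sum>E\<in>?P. signed_sup {..<n} W E (\<lambda>i w. row_dot q B w i / n)) \<partial>?M)"
  proof (rule nn_integral_mono)
    fix B
    show "(\<Sum>E\<in>?P. signed_sup {..<n} W E (\<lambda>i w. \<bar>row_dot q B w i\<bar> / n))
      \<le> (\<Sum>E\<in>?P. signed_sup {..<n} W E (\<lambda>i w. row_dot q B w i / n))"
      using sum_Pow_signed_sup_abs_le[of "{..<n}" "\<lambda>_. 0" W "\<lambda>i w. row_dot q B w i / n"] zero_in_W
      by (simp add: abs_divide)
  qed
  also have "\<dots> = of_nat (card ?P)
      * ((\<integral>\<^sup>+g. (SUP w\<in>W. ennreal (\<Sum>k<q. g k * w k)) \<partial>gauss_vec q) / ennreal (sqrt n))"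
    by (simp add: nn_integral_sum measurable_linear nn_integral_signed_sup_row_dot)
  finally show ?thesis .
qed

lemma nn_integral_l1_gap_le_countable:
  "(\<integral>\<^sup>+B. l1_gap n q W B \<partial>gauss_mat n q)
    \<le> 2 * (\<integral>\<^sup>+g. (SUP w\<in>W. ennreal (\<Sum>k<q. g k * w k)) \<partial>gauss_vec q) / ennreal (sqrt n)"
proof -
  let ?M = "gauss_mat n q" and ?P = "Pow {..<n}"
  define R where "R E = (\<integral>\<^sup>+B. signed_sup {..<n} W E (\<lambda>i w. \<bar>row_dot q B w i\<bar> / n) \<partial>?M)" for E
  define L where "L = (\<integral>\<^sup>+g. (SUP w\<in>W. ennreal (\<Sum>k<q. g k * w k)) \<partial>gauss_vec q) / ennreal (sqrt n)"
  have "of_nat (card ?P) * (\<integral>\<^sup>+B. l1_gap n q W B \<partial>?M) = (\<Sum>E\<in>?P. \<integral>\<^sup>+B. l1_gap n q W B \<partial>?M)"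
    by simp
  also have "\<dots> \<le> (\<Sum>E\<in>?P. R E + R ({..<n} - E))"
    unfolding R_def by (intro sum_mono nn_integral_l1_gap_le_signed_sup_abs) auto
  also have "\<dots> = 2 * (\<Sum>E\<in>?P. R E)"
  proof -
    have "(\<Sum>E\<in>?P. R ({..<n} - E)) = (\<Sum>E\<in>?P. R E)"
      by (rule sum.reindex_bij_witness[of _ "\<lambda>E. {..<n} - E" "\<lambda>E. {..<n} - E"]) auto
    then show ?thesis by (simp add: sum.distrib mult_2)
  qed
  also have "\<dots> \<le> 2 * (of_nat (card ?P) * L)"
    unfolding R_def L_def by (intro mult_left_mono sum_nn_integral_signed_sup_abs_row_dot_le) simp
  finally have "of_nat (card ?P) * (\<integral>\<^sup>+B. l1_gap n q W B \<partial>?M) \<le> of_nat (card ?P) * (2 * L)"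
    by (simp add: mult_ac)
  moreover have "(of_nat (card ?P) :: ennreal) \<noteq> 0"
    by (simp add: Pow_not_empty)
  ultimately have "(\<integral>\<^sup>+B. l1_gap n q W B \<partial>?M) \<le> 2 * L"
    using ennreal_mult_le_mult_iff[OF _ ennreal_of_nat_neq_top] by blast
  then show ?thesis by (simp add: L_def ennreal_times_divide)
qed

end

section \<open>Reduction to countable sets of directions\<close>

lemma countable_dense_subset:
  fixes T :: "'a::second_countable_topology set"
  obtains D where "D \<subseteq> T" "countable D" "\<And>U. open U \<Longrightarrow> U \<inter> T \<noteq> {} \<Longrightarrow> U \<inter> D \<noteq> {}"
proof -
  obtain \<B> :: "'a set set" where \<B>: "countable \<B>" "topological_basis \<B>"
    using ex_countable_basis by blast
  define pick where "pick b = (SOME x. x \<in> b \<inter> T)" for b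
  have pick: "pick b \<in> b \<inter> T" if "b \<inter> T \<noteq> {}" for b
    unfolding pick_def by (rule someI_ex) (use that in blast)
  define D where "D = pick ` {b\<in>\<B>. b \<inter> T \<noteq> {}}"
  have "U \<inter> D \<noteq> {}" if U: "open U" "U \<inter> T \<noteq> {}" for U
  proof -
    obtain u where u: "u \<in> U" "u \<in> T" using U by auto
    obtain b where b: "b \<in> \<B>" "u \<in> b" "b \<subseteq> U"
      using topological_basisE[OF \<B>(2) U(1) u(1)] by blast
    then have "pick b \<in> D" "pick b \<in> U" using u pick[of b] by (auto simp: D_def)
    then show ?thesis by blast
  qed
  moreover have "D \<subseteq> T" "countable D" using pick \<B>(1) by (auto simp: D_def)
  ultimately show ?thesis using that by blast
qed

lemma SUP_ennreal_dense_subset: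
  fixes r :: "'a::topological_space \<Rightarrow> real"
  assumes DT: "D \<subseteq> T" and dense: "\<And>U. open U \<Longrightarrow> U \<inter> T \<noteq> {} \<Longrightarrow> U \<inter> D \<noteq> {}"
    and r: "continuous_on UNIV r"
  shows "(SUP u\<in>D. ennreal (r u)) = (SUP u\<in>T. ennreal (r u))"
proof (rule antisym)
  show "(SUP u\<in>D. ennreal (r u)) \<le> (SUP u\<in>T. ennreal (r u))"
    using DT by (rule SUP_subset_mono) simp
  show "(SUP u\<in>T. ennreal (r u)) \<le> (SUP u\<in>D. ennreal (r u))"
  proof (rule SUP_least, rule dense_le)
    fix u y assume u: "u \<in> T" and y: "y < ennreal (r u)"
    then obtain y' where y': "y = ennreal y'" "0 \<le> y'" "y' < r u"
      by (cases y) (auto simp: ennreal_less_iff)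
    have "open {v. y' < r v}" by (rule open_Collect_less) (auto intro: r)
    moreover have "{v. y' < r v} \<inter> T \<noteq> {}" using u y' by auto
    ultimately obtain d where "d \<in> D" "y' < r d" using dense by blast
    then show "y \<le> (SUP u\<in>D. ennreal (r u))"
      using y' by (auto intro!: SUP_upper2 ennreal_leI)
  qed
qed

lemma l1_gap_dense_subset:
  assumes "D \<subseteq> W" and "\<And>U. open U \<Longrightarrow> U \<inter> W \<noteq> {} \<Longrightarrow> U \<inter> D \<noteq> {}"
  shows "l1_gap n q D B = l1_gap n q W B"
  unfolding l1_gap_def using assms
  by (intro SUP_ennreal_dense_subset)
     (auto simp: L2_set_def row_dot_def divide_inverse
       intro!: continuous_intros continuous_on_product_coordinates)

lemma borel_measurable_l1_gap: "l1_gap n q W \<in> borel_measurable (gauss_mat n q)"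
proof -
  obtain D where D: "D \<subseteq> W" "countable D" "\<And>U. open U \<Longrightarrow> U \<inter> W \<noteq> {} \<Longrightarrow> U \<inter> D \<noteq> {}"
    using countable_dense_subset by blast
  have "(\<lambda>B. l1_gap n q D B) \<in> borel_measurable (gauss_mat n q)"
    unfolding l1_gap_def
    by (intro borel_measurable_SUP D(2) measurable_compose[OF _ measurable_ennreal] borel_measurable_diff
        borel_measurable_const borel_measurable_divide borel_measurable_sum borel_measurable_abs
        borel_measurable_row_dot) auto
  then show ?thesis by (simp add: l1_gap_dense_subset[OF D(1,3)])
qed

lemma nn_integral_l1_gap_le:
  assumes n: "n > 0" and q: "q > 0" and zero: "(\<lambda>_. 0) \<in> W"
  shows "(\<integral>\<^sup>+B. l1_gap n q W B \<partial>gauss_mat n q)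
    \<le> 2 * (\<integral>\<^sup>+g. (SUP w\<in>W. ennreal (\<Sum>k<q. g k * w k)) \<partial>gauss_vec q) / ennreal (sqrt n)"
proof -
  obtain D where D: "D \<subseteq> W" "countable D" "\<And>U. open U \<Longrightarrow> U \<inter> W \<noteq> {} \<Longrightarrow> U \<inter> D \<noteq> {}"
    using countable_dense_subset by blast
  let ?D = "insert (\<lambda>_. 0) D"
  have "(\<integral>\<^sup>+B. l1_gap n q W B \<partial>gauss_mat n q) = (\<integral>\<^sup>+B. l1_gap n q ?D B \<partial>gauss_mat n q)"
    using D zero by (subst l1_gap_dense_subset[of ?D W]) blast+
  also have "\<dots> \<le> 2 * (\<integral>\<^sup>+g. (SUP w\<in>?D. ennreal (\<Sum>k<q. g k * w k)) \<partial>gauss_vec q) / ennreal (sqrt n)"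
    using n q D(2) by (intro nn_integral_l1_gap_le_countable) auto
  also have "\<dots> \<le> 2 * (\<integral>\<^sup>+g. (SUP w\<in>W. ennreal (\<Sum>k<q. g k * w k)) \<partial>gauss_vec q) / ennreal (sqrt n)"
    using D(1) zero
    by (intro divide_right_mono_ennreal mult_left_mono nn_integral_mono SUP_subset_mono) auto
  finally show ?thesis .
qed

lemma l1_residual_le:
  assumes nu: "(\<Sum>i<n. \<bar>\<nu> i\<bar>) / n \<le> \<epsilon>"
    and fit: "(\<Sum>i<n. \<bar>mat_vec p (mat_mult q B C) xh i - (mat_vec p (mat_mult q B C) xs i + \<nu> i)\<bar>) / n \<le> \<epsilon>"
  shows "(\<Sum>i<n. \<bar>row_dot q B (mat_vec p C (xh - xs)) i\<bar>) / n \<le> 2 * \<epsilon>"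
proof -
  have "(\<Sum>i<n. \<bar>row_dot q B (mat_vec p C (xh - xs)) i\<bar>)
      \<le> (\<Sum>i<n. \<bar>mat_vec p (mat_mult q B C) xh i - (mat_vec p (mat_mult q B C) xs i + \<nu> i)\<bar> + \<bar>\<nu> i\<bar>)"
    by (intro sum_mono) (simp add: mat_vec_diff row_dot_diff mat_vec_mat_mult)
  then have "(\<Sum>i<n. \<bar>row_dot q B (mat_vec p C (xh - xs)) i\<bar>) / n
      \<le> (\<Sum>i<n. \<bar>mat_vec p (mat_mult q B C) xh i - (mat_vec p (mat_mult q B C) xs i + \<nu> i)\<bar>) / n
        + (\<Sum>i<n. \<bar>\<nu> i\<bar>) / n"
    by (simp add: sum.distrib divide_right_mono flip: add_divide_distrib)
  then show ?thesis using nu fit by linarith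
qed

lemma sqrt_quadratic_form_le_l1_gap:
  assumes eps: "0 \<le> \<epsilon>" and W: "mat_vec p C (xh - xs) \<in> W"
    and nu: "(\<Sum>i<n. \<bar>\<nu> i\<bar>) / n \<le> \<epsilon>"
    and fit: "(\<Sum>i<n. \<bar>mat_vec p (mat_mult q B C) xh i - (mat_vec p (mat_mult q B C) xs i + \<nu> i)\<bar>) / n \<le> \<epsilon>"
  shows "ennreal (sqrt (\<Sum>j<p. \<Sum>l<p. (xh j - xs j) * (\<Sum>k<q. C k j * C k l) * (xh l - xs l)))
    \<le> ennreal (sqrt (pi/2)) * (2 * ennreal \<epsilon> + l1_gap n q W B)"
proof -
  define w where "w = mat_vec p C (xh - xs)"
  define N where "N = L2_set w {..<q}"
  define f where "f = (\<Sum>i<n. \<bar>row_dot q B w i\<bar>) / n"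
  have N: "sqrt (\<Sum>j<p. \<Sum>l<p. (xh j - xs j) * (\<Sum>k<q. C k j * C k l) * (xh l - xs l)) = N"
    using quadratic_form_eq_sum_square_mat_vec[where d="xh - xs" and p=p and q=q and C=C] by (simp add: N_def w_def L2_set_def)
  have "f \<le> 2 * \<epsilon>" using l1_residual_le[OF nu fit] by (simp add: f_def w_def)
  then have "sqrt (2/pi) * N \<le> 2 * \<epsilon> + max 0 (sqrt (2/pi) * N - f)" by linarith
  then have "sqrt (pi/2) * (sqrt (2/pi) * N) \<le> sqrt (pi/2) * (2 * \<epsilon> + max 0 (sqrt (2/pi) * N - f))"
    by (rule mult_left_mono) simp
  moreover have "sqrt (pi/2) * (sqrt (2/pi) * N) = N"
    by (simp add: mult.assoc[symmetric] flip: real_sqrt_mult)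
  ultimately have "N \<le> sqrt (pi/2) * (2 * \<epsilon> + max 0 (sqrt (2/pi) * N - f))"
    by simp
  then have "ennreal N \<le> ennreal (sqrt (pi/2) * (2 * \<epsilon> + max 0 (sqrt (2/pi) * N - f)))"
    by (rule ennreal_leI)
  also have "\<dots> = ennreal (sqrt (pi/2)) * (2 * ennreal \<epsilon> + ennreal (sqrt (2/pi) * N - f))"
    using eps by (simp add: ennreal_mult ennreal_plus ennreal_max_0 ennreal_mult'')
  also have "\<dots> \<le> ennreal (sqrt (pi/2)) * (2 * ennreal \<epsilon> + l1_gap n q W B)"
    unfolding l1_gap_def N_def f_def using W
    by (intro mult_left_mono add_left_mono SUP_upper) (auto simp: w_def)
  finally show ?thesis by (simp add: N)
qed

lemma SUP_image_mat_vec_le: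
  "(SUP w\<in>mat_vec p C ` T. ennreal (\<Sum>k<q. g k * w k))
    \<le> (SUP u\<in>T. ennreal \<bar>\<Sum>j<p. (\<Sum>k<q. C k j * g k) * u j\<bar>)"
  unfolding image_image sum_mult_mat_vec by (rule SUP_subset_mono) (auto intro!: ennreal_leI)

lemma sqrt_pi_half_mult_eq:
  "ennreal (sqrt (pi/2)) * (2 * ennreal \<epsilon> + 2 * x / c) = ennreal (sqrt (2 * pi)) * (x / c + ennreal \<epsilon>)"
proof -
  have "sqrt (2 * pi) = sqrt (4 * (pi/2))" by simp
  also have "\<dots> = sqrt (pi/2) * 2" unfolding real_sqrt_mult by simp
  finally show ?thesis
    by (simp add: ennreal_mult'' divide_ennreal_def distrib_left distrib_right ac_simps)
qed

theorem theorem6: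
  fixes n q p :: nat
    and C :: "nat \<Rightarrow> nat \<Rightarrow> real"
    and K :: "(nat \<Rightarrow> real) set"
    and \<epsilon> :: real
  assumes n_pos: "n > 0"
    and K_sub: "K \<subseteq> vecs p"
    and eps_nonneg: "\<epsilon> \<ge> 0"
  shows
    "(\<integral>\<^sup>+ B. (SUP (xs, \<nu>, xh) \<in> {(xs, \<nu>, xh). xs \<in> K \<and> \<nu> \<in> vecs n
            \<and> (\<Sum>i<n. \<bar>\<nu> i\<bar>) / real n \<le> \<epsilon>
            \<and> xh \<in> K
            \<and> (\<Sum>i<n. \<bar>mat_vec p (mat_mult q B C) xh i
                       - (mat_vec p (mat_mult q B C) xs i + \<nu> i)\<bar>) / real n \<le> \<epsilon>}.
          ennreal (sqrt (\<Sum>j<p. \<Sum>l<p. (xh j - xs j) * (\<Sum>k<q. C k j * C k l) * (xh l - xs l))))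
        \<partial>gauss_mat n q)
     \<le> ennreal (sqrt (2 * pi)) *
        ((\<integral>\<^sup>+ g. (SUP u \<in> {a - b | a b. a \<in> K \<and> b \<in> K}.
                      ennreal \<bar>\<Sum>j<p. (\<Sum>k<q. C k j * g k) * u j\<bar>) \<partial>gauss_vec q)
           / ennreal (sqrt (real n))
         + ennreal \<epsilon>)"
  (is "(\<integral>\<^sup>+B. ?I B \<partial>gauss_mat n q) \<le> ennreal (sqrt (2 * pi)) * (?G / _ + _)")
proof (cases "K = {} \<or> q = 0")
  case True
  then have "?I B = 0" for B
    by (intro antisym SUP_least) (auto split: prod.splits)
  then show ?thesis by simp
next
  case False
  then have "q > 0" and "K \<noteq> {}" by auto
  define W where "W = mat_vec p C ` {a - b | a b. a \<in> K \<and> b \<in> K}"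
  obtain a where "a \<in> K" using \<open>K \<noteq> {}\<close> by blast
  moreover have "(\<lambda>_. 0) = mat_vec p C (a - a)" by (simp add: mat_vec_def)
  ultimately have "(\<lambda>_. 0) \<in> W" unfolding W_def by blast
  interpret prob_space "gauss_mat n q" by (rule prob_space_gauss_mat)
  have "(\<integral>\<^sup>+B. ?I B \<partial>gauss_mat n q)
      \<le> (\<integral>\<^sup>+B. ennreal (sqrt (pi/2)) * (2 * ennreal \<epsilon> + l1_gap n q W B) \<partial>gauss_mat n q)"
    using eps_nonneg by (intro nn_integral_mono SUP_least)
      (auto simp: W_def split: prod.splits intro!: sqrt_quadratic_form_le_l1_gap)
  also have "\<dots> = ennreal (sqrt (pi/2)) * (2 * ennreal \<epsilon> + (\<integral>\<^sup>+B. l1_gap n q W B \<partial>gauss_mat n q))"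
    using borel_measurable_l1_gap[of n q W]
    by (subst nn_integral_cmult) (auto simp: nn_integral_add emeasure_space_1)
  also have "\<dots> \<le> ennreal (sqrt (pi/2)) * (2 * ennreal \<epsilon> + 2 * ?G / ennreal (sqrt n))"
    using n_pos \<open>q > 0\<close> \<open>(\<lambda>_. 0) \<in> W\<close> unfolding W_def
    by (intro mult_left_mono add_left_mono order_trans[OF nn_integral_l1_gap_le]
        divide_right_mono_ennreal nn_integral_mono SUP_image_mat_vec_le) auto
  finally show ?thesis by (simp only: sqrt_pi_half_mult_eq)
qed

end
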